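(* Physically incoherent operations preserve $\mathrm{co}(\mathcal U)$: if $\rho\in\mathrm{co}(\mathcal U)$ and $\Lambda$ is a PIO, then $\Lambda(\rho)\in\mathrm{co}(\mathcal U)$.
   Context: Fixed computational basis $\{|i\rangle\}_{i=1}^d$. $\mathcal U_k$ is the set of uniformly coherent states $|\Psi\rangle=k^{-1/2}\sum_{j\in J}e^{i\theta_j}|j\rangle$, $J\subseteq[d]$, $|J|=k$, $\theta_j\in\mathbb R$; $\mathcal U=\bigcup_{k=1}^d\mathcal U_k$ (as density matrices $|\Psi\rangle\langle\Psi|$), and $\mathrm{co}(\mathcal U)$ its convex hull. PIO: channels $X\mapsto\sum_{\alpha,\beta}p_\alpha U_{\alpha,\beta}\Pi_{\beta|\alpha}X\Pi_{\beta|\alpha}U_{\alpha,\beta}^\dagger$ with $p$ a probability distribution, $U_{\alpha,\beta}$ incoherent unitaries (permutation matrix times diagonal unitary), and for each $\alpha$ incoherent projectors $\Pi_{\beta|\alpha}=\sum_{i\in I_{\beta|\alpha}}|i\rangle\langle i|$ summing to the identity. *)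

theory Defs
  imports "HOL-Analysis.Analysis"
begin

text \<open>The computational basis of C^d is indexed by the finite type 'n (d = CARD('n)).
  Density matrices / operators are complex^'n^'n.\<close>

definition ket_bra :: "complex^'n \<Rightarrow> complex^'n^'n" where
  "ket_bra v = (\<chi> i j. v$i * cnj (v$j))"

definition ctrans :: "complex^'n^'n \<Rightarrow> complex^'n^'n" where
  "ctrans M = (\<chi> i j. cnj (M$j$i))"

definition uniformly_coherent :: "nat \<Rightarrow> complex^'n \<Rightarrow> bool" where
  "uniformly_coherent k v \<longleftrightarrow> k \<ge> 1 \<and> (\<exists>(J::'n set) (\<theta>::'n \<Rightarrow> real). card J = k \<and>
     v = (\<chi> j. if j \<in> J then exp (\<i> * complex_of_real (\<theta> j)) / complex_of_real (sqrt (real k)) else 0))"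

definition U_k :: "nat \<Rightarrow> (complex^'n^'n) set" where
  "U_k k = {ket_bra v | v. uniformly_coherent k v}"

definition U_all :: "(complex^'n^'n) set" where
  "U_all = (\<Union>k\<in>{1..CARD('n)}. U_k k)"

definition perm_matrix :: "('n \<Rightarrow> 'n) \<Rightarrow> complex^'n^'n" where
  "perm_matrix \<sigma> = (\<chi> i j. if i = \<sigma> j then 1 else 0)"

definition diag_unitary :: "('n \<Rightarrow> real) \<Rightarrow> complex^'n^'n" where
  "diag_unitary \<theta> = (\<chi> i j. if i = j then exp (\<i> * complex_of_real (\<theta> i)) else 0)"

definition incoherent_unitary :: "complex^'n^'n \<Rightarrow> bool" where
  "incoherent_unitary U \<longleftrightarrow> (\<exists>\<sigma> \<theta>. \<sigma> permutes (UNIV::'n set) \<and> U = perm_matrix \<sigma> ** diag_unitary \<theta>)"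

definition incoh_proj :: "'n set \<Rightarrow> complex^'n^'n" where
  "incoh_proj I = (\<chi> i j. if i = j \<and> i \<in> I then 1 else 0)"

definition PIO :: "(complex^'n^'n \<Rightarrow> complex^'n^'n) \<Rightarrow> bool" where
  "PIO \<Lambda> \<longleftrightarrow> (\<exists>(A::nat set) (p::nat \<Rightarrow> real) (B::nat \<Rightarrow> nat set)
      (I::nat \<Rightarrow> nat \<Rightarrow> 'n set) (U::nat \<Rightarrow> nat \<Rightarrow> complex^'n^'n).
      finite A \<and> (\<forall>\<alpha>\<in>A. p \<alpha> \<ge> 0) \<and> (\<Sum>\<alpha>\<in>A. p \<alpha>) = 1 \<and>
      (\<forall>\<alpha>\<in>A. finite (B \<alpha>) \<and> (\<Sum>\<beta>\<in>B \<alpha>. incoh_proj (I \<alpha> \<beta>)) = mat 1 \<and>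
                (\<forall>\<beta>\<in>B \<alpha>. incoherent_unitary (U \<alpha> \<beta>))) \<and>
      (\<forall>X. \<Lambda> X = (\<Sum>\<alpha>\<in>A. \<Sum>\<beta>\<in>B \<alpha>. p \<alpha> *\<^sub>R
          (U \<alpha> \<beta> ** incoh_proj (I \<alpha> \<beta>) ** X ** incoh_proj (I \<alpha> \<beta>) ** ctrans (U \<alpha> \<beta>)))))"

end

theory Submission
  imports Defs
begin

(* A PIO is linear, so it suffices to treat the generators |Psi><Psi| of co(U).
   Write |Psi> = k^(-1/2) phi_J, with phi_J the unnormalised phase vector supported on J.
   A Kraus operator U Pi_I of the PIO maps phi_J to a phase vector supported on a set of
   size |I \<inter> J|, so U Pi_I |Psi><Psi| Pi_I U^+ is |I \<inter> J|/k times an element of U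
   (or zero).  The projectors Pi_I of each branch partition the basis, so these weights
   sum to one and the image is a convex combination of elements of U. *)

definition phase_vector :: "'n set \<Rightarrow> ('n \<Rightarrow> real) \<Rightarrow> complex^'n" where
  "phase_vector J \<theta> = (\<chi> i. if i \<in> J then exp (\<i> * complex_of_real (\<theta> i)) else 0)"

lemma phase_vector_empty [simp]: "phase_vector {} \<theta> = 0"
  by (simp add: phase_vector_def vec_eq_iff)

lemma ket_bra_zero [simp]: "ket_bra 0 = 0"
  by (simp add: ket_bra_def vec_eq_iff)

lemma ket_bra_scaleR: "ket_bra (c *\<^sub>R v) = c\<^sup>2 *\<^sub>R ket_bra v"
  by (simp add: ket_bra_def vec_eq_iff power2_eq_square mult_ac)

lemma ket_bra_matrix_vector_mult: "ket_bra (A *v v) = A ** ket_bra v ** ctrans A"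
  by (simp add: ket_bra_def ctrans_def matrix_matrix_mult_def matrix_vector_mult_def vec_eq_iff
      sum_distrib_left sum_distrib_right mult_ac)

lemma ctrans_matrix_mult: "ctrans (A ** B) = ctrans B ** ctrans A"
  by (simp add: ctrans_def matrix_matrix_mult_def vec_eq_iff mult.commute)

lemma ctrans_incoh_proj [simp]: "ctrans (incoh_proj I) = incoh_proj I"
  by (simp add: ctrans_def incoh_proj_def vec_eq_iff)

lemma matrix_add_rdistrib: "(A + B) ** C = A ** C + B ** (C :: 'a::semiring_1^'p^'m)"
  by (simp add: matrix_matrix_mult_def vec_eq_iff sum.distrib[symmetric] distrib_right)

lemma diagonal_matrix_vector_mult:
  fixes d :: "'n::finite \<Rightarrow> 'a::semiring_1"
  shows "(\<chi> i j. if i = j then d i else 0) *v x = (\<chi> i. d i * x $ i)"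
  by (simp add: matrix_vector_mult_def vec_eq_iff if_distrib if_distribR cong: if_cong)

lemma incoh_proj_mult_phase_vector: "incoh_proj I *v phase_vector J \<theta> = phase_vector (I \<inter> J) \<theta>"
proof -
  have diag: "incoh_proj I = (\<chi> i j. if i = j then (if i \<in> I then 1 else 0) else 0)"
    by (simp add: incoh_proj_def vec_eq_iff)
  show ?thesis
    unfolding diag by (simp add: diagonal_matrix_vector_mult phase_vector_def vec_eq_iff)
qed

lemma diag_unitary_mult_phase_vector:
  "diag_unitary \<theta>' *v phase_vector J \<theta> = phase_vector J (\<lambda>i. \<theta>' i + \<theta> i)"
  by (simp add: diag_unitary_def diagonal_matrix_vector_mult phase_vector_def vec_eq_iff
      exp_add[symmetric] distrib_left)

lemma perm_matrix_mult_phase_vector: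
  assumes "\<sigma> permutes UNIV"
  shows "perm_matrix \<sigma> *v phase_vector J \<theta> = phase_vector (\<sigma> ` J) (\<theta> \<circ> inv \<sigma>)"
proof -
  have "perm_matrix \<sigma> *v x = (\<chi> i. x $ inv \<sigma> i)" for x
  proof -
    have "i = \<sigma> j \<longleftrightarrow> j = inv \<sigma> i" for i j
      using assms permutes_inverses by metis
    then show ?thesis
      by (simp add: perm_matrix_def matrix_vector_mult_def vec_eq_iff
          if_distrib[where f = "\<lambda>c. c * y" for y] cong: if_cong)
  qed
  moreover have "inv \<sigma> i \<in> J \<longleftrightarrow> i \<in> \<sigma> ` J" for i
    using assms by (metis image_iff permutes_inverses)
  ultimately show ?thesis
    by (simp add: phase_vector_def vec_eq_iff)
qed

lemma incoherent_unitary_mult_phase_vector: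
  assumes "incoherent_unitary U"
  obtains J' \<theta>' where "card J' = card J" "U *v phase_vector J \<theta> = phase_vector J' \<theta>'"
proof -
  obtain \<sigma> \<phi> where \<sigma>: "\<sigma> permutes UNIV" and U: "U = perm_matrix \<sigma> ** diag_unitary \<phi>"
    using assms unfolding incoherent_unitary_def by blast
  have "card (\<sigma> ` J) = card J"
    using \<sigma> by (meson card_image inj_on_subset permutes_inj subset_UNIV)
  moreover have "U *v phase_vector J \<theta> = phase_vector (\<sigma> ` J) ((\<lambda>i. \<phi> i + \<theta> i) \<circ> inv \<sigma>)"
    by (simp add: U matrix_vector_mul_assoc[symmetric] diag_unitary_mult_phase_vector
        perm_matrix_mult_phase_vector[OF \<sigma>])
  ultimately show thesis by (rule that)
qed

lemma uniformly_coherent_iff: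
  "uniformly_coherent k v \<longleftrightarrow>
     k \<ge> 1 \<and> (\<exists>J \<theta>. card J = k \<and> v = (1 / sqrt (real k)) *\<^sub>R phase_vector J \<theta>)"
proof -
  have normalised: "(\<chi> j. if j \<in> J then exp (\<i> * complex_of_real (\<theta> j)) / complex_of_real (sqrt (real k)) else 0)
      = (1 / sqrt (real k)) *\<^sub>R phase_vector J \<theta>" for J \<theta>
    unfolding vec_eq_iff vector_scaleR_component
    by (simp add: phase_vector_def scaleR_conv_of_real divide_inverse of_real_inverse)
  show ?thesis unfolding uniformly_coherent_def normalised ..
qed

lemma U_all_eq:
  "U_all = {(1 / real (card J)) *\<^sub>R ket_bra (phase_vector J \<theta>) | (J::'n::finite set) \<theta>. J \<noteq> {}}"
proof (intro set_eqI iffI)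
  have normalised: "ket_bra ((1 / sqrt (real (card J))) *\<^sub>R phase_vector J \<theta>)
      = (1 / real (card J)) *\<^sub>R ket_bra (phase_vector J \<theta>)" for J :: "'n set" and \<theta>
    by (simp add: ket_bra_scaleR power_divide)
  {
    fix X :: "complex^'n^'n" assume "X \<in> U_all"
    then obtain v J \<theta> where J: "card J \<ge> 1" and X: "X = ket_bra v"
      and v: "v = (1 / sqrt (real (card J))) *\<^sub>R phase_vector J \<theta>"
      unfolding U_all_def U_k_def uniformly_coherent_iff by blast
    have "X = (1 / real (card J)) *\<^sub>R ket_bra (phase_vector J \<theta>)"
      unfolding X v by (rule normalised)
    moreover have "J \<noteq> {}" using J by auto
    ultimately show "X \<in> {(1 / real (card J)) *\<^sub>R ket_bra (phase_vector J \<theta>) | J \<theta>. J \<noteq> {}}"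
      by auto
  next
    fix X :: "complex^'n^'n" assume "X \<in> {(1 / real (card J)) *\<^sub>R ket_bra (phase_vector J \<theta>) | J \<theta>. J \<noteq> {}}"
    then obtain J \<theta> where J: "J \<noteq> {}"
      and "X = (1 / real (card J)) *\<^sub>R ket_bra (phase_vector J \<theta>)"
      by blast
    then have X: "X = ket_bra ((1 / sqrt (real (card J))) *\<^sub>R phase_vector J \<theta>)"
      by (simp only: normalised)
    have card: "card J \<in> {1..CARD('n)}"
      using J card_mono[OF finite subset_UNIV, of J] by (simp add: Suc_le_eq card_gt_0_iff)
    then have "uniformly_coherent (card J) ((1 / sqrt (real (card J))) *\<^sub>R phase_vector J \<theta>)"
      unfolding uniformly_coherent_iff by auto
    then show "X \<in> U_all"
      unfolding U_all_def U_k_def X using card by blast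
  }
qed

lemma ket_bra_phase_vector_in_cone_U_all:
  "\<exists>Y\<in>U_all. ket_bra (phase_vector J \<theta>) = real (card J) *\<^sub>R Y"
proof (cases "J = {}")
  case True
  have "(1 / real (card {undefined})) *\<^sub>R ket_bra (phase_vector {undefined} \<theta>) \<in> U_all"
    unfolding U_all_eq by (intro CollectI exI[of _ "{undefined}"] exI[of _ \<theta>]) simp
  with True show ?thesis by auto
next
  case False
  then have "(1 / real (card J)) *\<^sub>R ket_bra (phase_vector J \<theta>) \<in> U_all"
    unfolding U_all_eq by blast
  moreover have "real (card J) \<noteq> 0" using False by simp
  ultimately show ?thesis by (intro bexI) auto
qed

lemma incoherent_kraus_ket_bra_phase_vector:
  assumes "incoherent_unitary U"
  shows "\<exists>Y\<in>U_all. U ** incoh_proj I ** ket_bra (phase_vector J \<theta>) ** incoh_proj I ** ctrans U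
           = real (card (I \<inter> J)) *\<^sub>R Y"
proof -
  obtain J' \<theta>' where card: "card J' = card (I \<inter> J)"
    and U: "U *v phase_vector (I \<inter> J) \<theta> = phase_vector J' \<theta>'"
    using incoherent_unitary_mult_phase_vector[OF assms] .
  have "U ** incoh_proj I ** ket_bra (phase_vector J \<theta>) ** incoh_proj I ** ctrans U
      = ket_bra ((U ** incoh_proj I) *v phase_vector J \<theta>)"
    by (simp add: ket_bra_matrix_vector_mult ctrans_matrix_mult matrix_mul_assoc)
  also have "\<dots> = ket_bra (phase_vector J' \<theta>')"
    by (simp add: matrix_vector_mul_assoc[symmetric] incoh_proj_mult_phase_vector U)
  finally show ?thesis
    using ket_bra_phase_vector_in_cone_U_all[of J' \<theta>'] card by simp
qed

lemma sum_card_inter_partition: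
  fixes I :: "'b \<Rightarrow> 'n::finite set"
  assumes "(\<Sum>\<beta>\<in>B. incoh_proj (I \<beta>)) = mat 1"
  shows "(\<Sum>\<beta>\<in>B. card (I \<beta> \<inter> J)) = card J"
proof -
  have cover: "(\<Sum>\<beta>\<in>B. if j \<in> I \<beta> then 1 else 0 :: nat) = 1" for j
  proof -
    have "(\<Sum>\<beta>\<in>B. incoh_proj (I \<beta>)) $ j $ j = 1"
      using assms by (simp add: mat_def)
    then have "(\<Sum>\<beta>\<in>B. if j \<in> I \<beta> then 1 else 0 :: complex) = 1"
      by (simp add: incoh_proj_def)
    then have "of_nat (\<Sum>\<beta>\<in>B. if j \<in> I \<beta> then 1 else 0 :: nat) = (1 :: complex)"
      by (simp add: if_distrib cong: if_cong)
    then show ?thesis by (metis of_nat_1 of_nat_eq_iff)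
  qed
  have "(\<Sum>\<beta>\<in>B. card (I \<beta> \<inter> J)) = (\<Sum>\<beta>\<in>B. \<Sum>j\<in>J. if j \<in> I \<beta> then 1 else 0 :: nat)"
    by (simp add: sum.If_cases Int_commute)
  also have "\<dots> = (\<Sum>j\<in>J. \<Sum>\<beta>\<in>B. if j \<in> I \<beta> then 1 else 0 :: nat)"
    by (rule sum.swap)
  finally show ?thesis by (simp add: cover)
qed

lemma double_sum_scaleR_in_convex_hull:
  assumes "finite A" "\<And>\<alpha>. \<alpha> \<in> A \<Longrightarrow> finite (B \<alpha>)"
    and "\<And>\<alpha> \<beta>. \<alpha> \<in> A \<Longrightarrow> \<beta> \<in> B \<alpha> \<Longrightarrow> 0 \<le> w \<alpha> \<beta>"
    and "(\<Sum>\<alpha>\<in>A. \<Sum>\<beta>\<in>B \<alpha>. w \<alpha> \<beta>) = 1"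
    and "\<And>\<alpha> \<beta>. \<alpha> \<in> A \<Longrightarrow> \<beta> \<in> B \<alpha> \<Longrightarrow> \<exists>y\<in>S. f \<alpha> \<beta> = w \<alpha> \<beta> *\<^sub>R y"
  shows "(\<Sum>\<alpha>\<in>A. \<Sum>\<beta>\<in>B \<alpha>. f \<alpha> \<beta>) \<in> convex hull S"
proof -
  obtain y where y: "\<And>\<alpha> \<beta>. \<alpha> \<in> A \<Longrightarrow> \<beta> \<in> B \<alpha> \<Longrightarrow> y \<alpha> \<beta> \<in> S \<and> f \<alpha> \<beta> = w \<alpha> \<beta> *\<^sub>R y \<alpha> \<beta>"
    using assms(5) by metis
  have sigma: "(\<Sum>\<alpha>\<in>A. \<Sum>\<beta>\<in>B \<alpha>. g \<alpha> \<beta>) = (\<Sum>(\<alpha>, \<beta>)\<in>Sigma A B. g \<alpha> \<beta>)" for g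
    using assms(1,2) by (simp add: sum.Sigma)
  have "(\<Sum>i\<in>Sigma A B. case_prod w i *\<^sub>R case_prod y i) \<in> convex hull S"
    using assms(1-4) y by (intro convex_sum) (auto simp: sigma split_beta intro: hull_inc)
  moreover have "(\<Sum>\<alpha>\<in>A. \<Sum>\<beta>\<in>B \<alpha>. f \<alpha> \<beta>) = (\<Sum>i\<in>Sigma A B. case_prod w i *\<^sub>R case_prod y i)"
    using y by (simp add: sigma split_beta cong: sum.cong)
  ultimately show ?thesis by simp
qed

lemma PIO_linear:
  assumes "PIO \<Lambda>"
  shows "linear \<Lambda>"
proof -
  obtain A :: "nat set" and p and B :: "nat \<Rightarrow> nat set" and I U
    where \<Lambda>: "\<forall>X. \<Lambda> X = (\<Sum>\<alpha>\<in>A. \<Sum>\<beta>\<in>B \<alpha>. p \<alpha> *\<^sub>R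
      (U \<alpha> \<beta> ** incoh_proj (I \<alpha> \<beta>) ** X ** incoh_proj (I \<alpha> \<beta>) ** ctrans (U \<alpha> \<beta>)))"
    using assms unfolding PIO_def by blast
  show ?thesis
    by (rule linearI) (simp_all add: \<Lambda> matrix_add_ldistrib matrix_add_rdistrib matrix_scalar_ac
        scalar_matrix_assoc scaleR_add_right sum.distrib scaleR_sum_right mult.commute)
qed

lemma PIO_U_all_in_convex_hull:
  assumes "PIO \<Lambda>" "X \<in> U_all"
  shows "\<Lambda> X \<in> convex hull U_all"
proof -
  obtain A :: "nat set" and p and B :: "nat \<Rightarrow> nat set" and I U
    where fA: "finite A" and p: "\<forall>\<alpha>\<in>A. p \<alpha> \<ge> 0" "(\<Sum>\<alpha>\<in>A. p \<alpha>) = 1"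
    and B: "\<forall>\<alpha>\<in>A. finite (B \<alpha>) \<and> (\<Sum>\<beta>\<in>B \<alpha>. incoh_proj (I \<alpha> \<beta>)) = mat 1 \<and>
                (\<forall>\<beta>\<in>B \<alpha>. incoherent_unitary (U \<alpha> \<beta>))"
    and \<Lambda>: "\<forall>X. \<Lambda> X = (\<Sum>\<alpha>\<in>A. \<Sum>\<beta>\<in>B \<alpha>. p \<alpha> *\<^sub>R
      (U \<alpha> \<beta> ** incoh_proj (I \<alpha> \<beta>) ** X ** incoh_proj (I \<alpha> \<beta>) ** ctrans (U \<alpha> \<beta>)))"
    using assms(1) unfolding PIO_def by blast
  obtain J \<theta> where J: "J \<noteq> {}" and X: "X = (1 / real (card J)) *\<^sub>R ket_bra (phase_vector J \<theta>)"
    using assms(2) unfolding U_all_eq by blast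
  define T where "T \<alpha> \<beta> = U \<alpha> \<beta> ** incoh_proj (I \<alpha> \<beta>) ** X ** incoh_proj (I \<alpha> \<beta>) ** ctrans (U \<alpha> \<beta>)"
    for \<alpha> \<beta>
  define w where "w \<alpha> \<beta> = p \<alpha> * (real (card (I \<alpha> \<beta> \<inter> J)) / real (card J))" for \<alpha> \<beta>
  have "(\<Sum>\<alpha>\<in>A. \<Sum>\<beta>\<in>B \<alpha>. w \<alpha> \<beta>) = (\<Sum>\<alpha>\<in>A. p \<alpha> * (\<Sum>\<beta>\<in>B \<alpha>. real (card (I \<alpha> \<beta> \<inter> J))) / real (card J))"
    by (simp add: w_def sum_distrib_left sum_divide_distrib)
  also have "\<dots> = 1"
    using B J p(2) by (simp add: sum_card_inter_partition flip: of_nat_sum)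
  finally have "(\<Sum>\<alpha>\<in>A. \<Sum>\<beta>\<in>B \<alpha>. w \<alpha> \<beta>) = 1" .
  moreover have "\<exists>Y\<in>U_all. p \<alpha> *\<^sub>R T \<alpha> \<beta> = w \<alpha> \<beta> *\<^sub>R Y" if "\<alpha> \<in> A" "\<beta> \<in> B \<alpha>" for \<alpha> \<beta>
  proof -
    have "incoherent_unitary (U \<alpha> \<beta>)" using that B by blast
    then obtain Y where "Y \<in> U_all" and Y: "U \<alpha> \<beta> ** incoh_proj (I \<alpha> \<beta>) ** ket_bra (phase_vector J \<theta>)
        ** incoh_proj (I \<alpha> \<beta>) ** ctrans (U \<alpha> \<beta>) = real (card (I \<alpha> \<beta> \<inter> J)) *\<^sub>R Y"
      using incoherent_kraus_ket_bra_phase_vector by blast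
    moreover have "p \<alpha> *\<^sub>R T \<alpha> \<beta> = w \<alpha> \<beta> *\<^sub>R Y"
      by (simp add: T_def X matrix_scalar_ac Y w_def flip: scalar_matrix_assoc)
    ultimately show ?thesis by blast
  qed
  ultimately have "(\<Sum>\<alpha>\<in>A. \<Sum>\<beta>\<in>B \<alpha>. p \<alpha> *\<^sub>R T \<alpha> \<beta>) \<in> convex hull U_all"
    using fA B p(1) by (intro double_sum_scaleR_in_convex_hull) (auto simp: w_def)
  then show ?thesis
    by (simp add: \<Lambda> T_def)
qed

theorem lemma11:
  fixes \<rho> :: "complex^'n^'n" and \<Lambda> :: "complex^'n^'n \<Rightarrow> complex^'n^'n"
  assumes "\<rho> \<in> convex hull U_all"
    and "PIO \<Lambda>"
  shows "\<Lambda> \<rho> \<in> convex hull U_all"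
proof -
  have "\<Lambda> ` (convex hull U_all) = convex hull (\<Lambda> ` U_all)"
    using PIO_linear[OF assms(2)] by (rule convex_hull_linear_image)
  also have "\<dots> \<subseteq> convex hull U_all"
    using PIO_U_all_in_convex_hull[OF assms(2)]
    by (intro hull_minimal) (auto simp: convex_convex_hull)
  finally show ?thesis using assms(1) by blast
qed

end
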